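(* Let $\alpha_1\neq0$ and $b>3/8$. Then there is a constant $C$ depending only on $\alpha_1$ and $b$ such that for all $P,Q\in\mathbb R$ and all functions $\tilde u,\tilde v:\mathbb R\times\mathbb Z\to\mathbb C$, $$\big\||\tilde u|*_{\tau,k_1}|\tilde v|\big\|_{\ell^2_{k_1}L^2_\tau}\le C\,\big\|\langle\tau+(\alpha_1k_1+P)^3\rangle^b\tilde u(\tau,k_1)\big\|_{\ell^2_{k_1}L^2_\tau}\big\|\langle\tau+(\alpha_1k_1+Q)^3\rangle^b\tilde v(\tau,k_1)\big\|_{\ell^2_{k_1}L^2_\tau}.$$
   Context: $\langle x\rangle=(1+|x|^2)^{1/2}$. The convolution on $\mathbb R\times\mathbb Z$ is $$(|\tilde u|*_{\tau,k_1}|\tilde v|)(\tau,k_1)=\sum_{k_1'\in\mathbb Z}\int_{\mathbb R}|\tilde u(\tau-\tau',k_1-k_1')||\tilde v(\tau',k_1')|\,d\tau'.$$ *)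

theory Defs
  imports "HOL-Analysis.Analysis"
begin

definition japanese :: "real \<Rightarrow> real" where
  "japanese x = sqrt (1 + x\<^sup>2)"

definition ennsqrt :: "ennreal \<Rightarrow> ennreal" where
  "ennsqrt x = (if x = top then top else ennreal (sqrt (enn2real x)))"

definition l2L2 :: "(real \<Rightarrow> int \<Rightarrow> complex) \<Rightarrow> ennreal" where
  "l2L2 f = ennsqrt (\<integral>\<^sup>+ k. (\<integral>\<^sup>+ \<tau>. ennreal ((cmod (f \<tau> k))\<^sup>2) \<partial>lborel) \<partial>count_space UNIV)"

definition l2L2e :: "(real \<Rightarrow> int \<Rightarrow> ennreal) \<Rightarrow> ennreal" where
  "l2L2e F = ennsqrt (\<integral>\<^sup>+ k. (\<integral>\<^sup>+ \<tau>. (F \<tau> k)\<^sup>2 \<partial>lborel) \<partial>count_space UNIV)"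

definition absconv :: "(real \<Rightarrow> int \<Rightarrow> complex) \<Rightarrow> (real \<Rightarrow> int \<Rightarrow> complex) \<Rightarrow> real \<Rightarrow> int \<Rightarrow> ennreal" where
  "absconv u v \<tau> k = (\<integral>\<^sup>+ k'. (\<integral>\<^sup>+ \<tau>'. ennreal (cmod (u (\<tau> - \<tau>') (k - k')) * cmod (v \<tau>' k')) \<partial>lborel) \<partial>count_space UNIV)"

end

theory Submission
  imports Defs
begin

text \<open>
  Write
  \<open>|u| = f / w\<^sub>u\<close>, \<open>|v| = g / w\<^sub>v\<close> with the weights \<open>w\<^sub>u(\<tau>,j) = \<langle>\<tau> + (\<alpha>j + P)^3\<rangle>^b\<close>,
  \<open>w\<^sub>v(\<tau>,j) = \<langle>\<tau> + (\<alpha>j + Q)^3\<rangle>^b\<close>.  Two applications of Cauchy--Schwarz (in \<open>\<tau>'\<close> and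
  in \<open>k'\<close>) reduce the estimate to bounds on the time kernel
  \<open>K(\<tau>,k,k') = \<integral> w\<^sub>u(\<tau>-\<tau>',k-k')\<^sup>-\<^sup>2 w\<^sub>v(\<tau>',k')\<^sup>-\<^sup>2 d\<tau>'\<close>:
  a uniform bound, and a bound on \<open>\<Sum>\<^sub>k\<^sub>' K(\<tau>,k,k')\<close> for all but at most one \<open>k\<close>
  (a Schur test with one exceptional row).
\<close>

text \<open>Square roots in \<open>[0,\<infinity>]\<close>: the norms of the statement are \<open>ennsqrt\<close> of extended
  nonnegative integrals, so we work with squared norms and take roots at the end.\<close>

lemma ennreal_sq_le_iff: "(x::ennreal)^2 \<le> y^2 \<longleftrightarrow> x \<le> y"
proof (cases x; cases y)
  fix a b assume "x = ennreal a" "0 \<le> a" "y = ennreal b" "0 \<le> b"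
  then show ?thesis by (simp add: ennreal_power)
qed (auto simp: ennreal_power top_unique)

lemma ennsqrt_sq [simp]: "(ennsqrt x)^2 = x"
  unfolding ennsqrt_def by (cases x) (auto simp: ennreal_power)

lemma ennsqrt_of_sq [simp]: "ennsqrt (x^2) = x"
  by (metis ennreal_sq_le_iff ennsqrt_sq order_antisym order_refl)

lemma ennsqrt_le_iff: "ennsqrt x \<le> ennsqrt y \<longleftrightarrow> x \<le> y"
  by (metis ennreal_sq_le_iff ennsqrt_sq)

lemma ennsqrt_mult: "ennsqrt (x * y) = ennsqrt x * ennsqrt y"
  by (metis ennsqrt_of_sq ennsqrt_sq power_mult_distrib)

lemma ennsqrt_ennreal: "0 \<le> x \<Longrightarrow> ennsqrt (ennreal x) = ennreal (sqrt x)"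
  by (simp add: ennsqrt_def)

lemma Cauchy_Schwarz_ennsqrt:
  assumes "f \<in> borel_measurable M" "g \<in> borel_measurable M"
  shows "(\<integral>\<^sup>+x. f x * g x \<partial>M) \<le> ennsqrt (\<integral>\<^sup>+x. f x ^ 2 \<partial>M) * ennsqrt (\<integral>\<^sup>+x. g x ^ 2 \<partial>M)"
  unfolding ennsqrt_mult[symmetric]
  by (metis Cauchy_Schwarz_nn_integral[OF assms] ennreal_sq_le_iff ennsqrt_sq)

lemma nn_integral_count_space_measurable:
  fixes h :: "'i::countable \<Rightarrow> 'a \<Rightarrow> ennreal"
  assumes "\<And>i. h i \<in> borel_measurable M"
  shows "(\<lambda>x. \<integral>\<^sup>+i. h i x \<partial>count_space UNIV) \<in> borel_measurable M"
proof -
  interpret S: sigma_finite_measure "count_space (UNIV::'i set)"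
    by (rule sigma_finite_measure_count_space_countable) simp
  have "(\<lambda>p. h (snd p) (fst p)) \<in> borel_measurable (M \<Otimes>\<^sub>M count_space UNIV)"
    by (rule measurable_compose_countable'[where f="\<lambda>i p. h i (fst p)" and g=snd and I=UNIV])
       (auto intro: measurable_compose[OF measurable_fst assms])
  then show ?thesis
    by (intro S.borel_measurable_nn_integral) (simp add: case_prod_unfold)
qed

lemma nn_integral_lborel_translate:
  fixes h :: "real \<Rightarrow> ennreal"
  assumes "h \<in> borel_measurable borel"
  shows "(\<integral>\<^sup>+\<tau>. h (\<tau> - t) \<partial>lborel) = (\<integral>\<^sup>+\<tau>. h \<tau> \<partial>lborel)"
  using nn_integral_real_affine[OF assms, of 1 "-t"] by simp

lemma nn_integral_int_shift:
  "(\<integral>\<^sup>+k. h (k - j) \<partial>count_space UNIV) = (\<integral>\<^sup>+k. h (k::int) \<partial>count_space UNIV)"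
  by (rule nn_integral_bij_count_space[of "\<lambda>k. k - j"])
     (auto simp: bij_betw_def inj_on_def image_iff intro!: exI[of _ "_ + j"])

lemma nn_integral_int_reflect:
  "(\<integral>\<^sup>+k'. h (k - k') \<partial>count_space UNIV) = (\<integral>\<^sup>+k. h (k::int) \<partial>count_space UNIV)"
  by (rule nn_integral_bij_count_space[of "\<lambda>k'. k - k'"])
     (auto simp: bij_betw_def inj_on_def image_iff intro!: exI[of _ "k - _"])

lemma nn_integral_count_space_square:
  "(\<integral>\<^sup>+x. h x \<partial>count_space A)^2 = (\<integral>\<^sup>+x. \<integral>\<^sup>+y. h x * h y \<partial>count_space A \<partial>count_space A)"
  by (simp add: power2_eq_square nn_integral_multc nn_integral_cmult)

definition slice_sq :: "(real \<Rightarrow> int \<Rightarrow> real) \<Rightarrow> int \<Rightarrow> ennreal" where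
  "slice_sq f j = (\<integral>\<^sup>+\<tau>. ennreal ((f \<tau> j)^2) \<partial>lborel)"

definition sq_norm :: "(real \<Rightarrow> int \<Rightarrow> real) \<Rightarrow> ennreal" where
  "sq_norm f = (\<integral>\<^sup>+k. slice_sq f k \<partial>count_space UNIV)"

definition prod_conv :: "(real \<Rightarrow> int \<Rightarrow> real) \<Rightarrow> (real \<Rightarrow> int \<Rightarrow> real) \<Rightarrow> real \<Rightarrow> int \<Rightarrow> int \<Rightarrow> ennreal" where
  "prod_conv F G \<tau> k k' = (\<integral>\<^sup>+\<tau>'. ennreal (F (\<tau> - \<tau>') (k - k') * G \<tau>' k') \<partial>lborel)"

definition sq_conv :: "(real \<Rightarrow> int \<Rightarrow> real) \<Rightarrow> (real \<Rightarrow> int \<Rightarrow> real) \<Rightarrow> real \<Rightarrow> int \<Rightarrow> int \<Rightarrow> ennreal" where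
  "sq_conv F G = prod_conv (\<lambda>s j. (F s j)^2) (\<lambda>s j. (G s j)^2)"

definition slice_measurable :: "(real \<Rightarrow> int \<Rightarrow> real) \<Rightarrow> bool" where
  "slice_measurable F \<longleftrightarrow> (\<forall>j. (\<lambda>\<tau>. F \<tau> j) \<in> borel_measurable borel)"

lemma slice_measurable_compose:
  assumes "slice_measurable F"
  shows "(\<lambda>\<tau>'. F (\<tau> - \<tau>') j) \<in> borel_measurable borel"
    and "(\<lambda>\<tau>'. F (\<tau>' - \<tau>) j) \<in> borel_measurable borel"
    and "(\<lambda>p::real \<times> real. F (fst p - snd p) j) \<in> borel_measurable (lborel \<Otimes>\<^sub>M lborel)"
    and "(\<lambda>p::real \<times> real. F (snd p) j) \<in> borel_measurable (lborel \<Otimes>\<^sub>M lborel)"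
proof -
  have F: "\<And>j. (\<lambda>\<tau>. F \<tau> j) \<in> borel_measurable borel"
    using assms by (simp add: slice_measurable_def)
  show "(\<lambda>\<tau>'. F (\<tau> - \<tau>') j) \<in> borel_measurable borel"
    and "(\<lambda>\<tau>'. F (\<tau>' - \<tau>) j) \<in> borel_measurable borel"
    and "(\<lambda>p::real \<times> real. F (fst p - snd p) j) \<in> borel_measurable (lborel \<Otimes>\<^sub>M lborel)"
    and "(\<lambda>p::real \<times> real. F (snd p) j) \<in> borel_measurable (lborel \<Otimes>\<^sub>M lborel)"
    by (rule measurable_compose[OF _ F]; simp cong: measurable_cong_sets)+
qed

lemma slice_measurable_times:
  "slice_measurable F \<Longrightarrow> slice_measurable G \<Longrightarrow> slice_measurable (\<lambda>s j. F s j * G s j)"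
  unfolding slice_measurable_def by (auto intro!: borel_measurable_times)

lemma slice_measurable_square:
  "slice_measurable F \<Longrightarrow> slice_measurable (\<lambda>s j. (F s j)^2)"
  unfolding slice_measurable_def by (auto intro!: borel_measurable_power)

lemma prod_conv_measurable:
  assumes "slice_measurable F" "slice_measurable G"
  shows "(\<lambda>\<tau>. prod_conv F G \<tau> k k') \<in> borel_measurable borel"
proof -
  have "(\<lambda>p::real\<times>real. ennreal (F (fst p - snd p) (k-k') * G (snd p) k'))
          \<in> borel_measurable (lborel \<Otimes>\<^sub>M lborel)"
    using slice_measurable_compose(3)[OF assms(1)] slice_measurable_compose(4)[OF assms(2)] by simp
  then have "(\<lambda>\<tau>. prod_conv F G \<tau> k k') \<in> borel_measurable lborel"
    unfolding prod_conv_def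
    by (intro lborel.borel_measurable_nn_integral) (simp add: case_prod_unfold)
  then show ?thesis by simp
qed

lemma nn_integral_int_convolution:
  fixes a b :: "int \<Rightarrow> ennreal"
  shows "(\<integral>\<^sup>+k. \<integral>\<^sup>+k'. a (k - k') * b k' \<partial>count_space UNIV \<partial>count_space UNIV)
       = (\<integral>\<^sup>+k. a k \<partial>count_space UNIV) * (\<integral>\<^sup>+k. b k \<partial>count_space UNIV)"
proof -
  have "(\<integral>\<^sup>+k. \<integral>\<^sup>+k'. a (k - k') * b k' \<partial>count_space UNIV \<partial>count_space UNIV)
      = (\<integral>\<^sup>+k'. \<integral>\<^sup>+k. a (k - k') * b k' \<partial>count_space UNIV \<partial>count_space UNIV)"
    by (rule nn_integral_count_space_nn_integral) simp_all
  also have "\<dots> = (\<integral>\<^sup>+k'. (\<integral>\<^sup>+k. a k \<partial>count_space UNIV) * b k' \<partial>count_space UNIV)"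
    by (simp add: nn_integral_multc nn_integral_int_shift[where h=a])
  finally show ?thesis by (simp add: nn_integral_cmult)
qed

text \<open>Integrating the time kernel over \<open>\<tau>\<close> factorises by Fubini and translation invariance.\<close>

lemma sq_conv_time_integral:
  assumes f: "slice_measurable f" and g: "slice_measurable g"
  shows "(\<integral>\<^sup>+\<tau>. sq_conv f g \<tau> k k' \<partial>lborel) = slice_sq f (k - k') * slice_sq g k'"
proof -
  have fm: "(\<lambda>\<tau>. ennreal ((f \<tau> j)^2)) \<in> borel_measurable borel" for j
    using slice_measurable_square[OF f] by (simp add: slice_measurable_def)
  have "(\<integral>\<^sup>+\<tau>. sq_conv f g \<tau> k k' \<partial>lborel)
      = (\<integral>\<^sup>+\<tau>'. \<integral>\<^sup>+\<tau>. ennreal ((f (\<tau>-\<tau>') (k-k'))^2) * ennreal ((g \<tau>' k')^2) \<partial>lborel \<partial>lborel)"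
    unfolding sq_conv_def prod_conv_def
    by (subst lborel_pair.Fubini')
       (use slice_measurable_compose(3)[OF f] slice_measurable_compose(4)[OF g]
        in \<open>simp_all add: case_prod_unfold ennreal_mult\<close>)
  also have "\<dots> = (\<integral>\<^sup>+\<tau>'. (\<integral>\<^sup>+\<tau>. ennreal ((f (\<tau>-\<tau>') (k-k'))^2) \<partial>lborel) * ennreal ((g \<tau>' k')^2) \<partial>lborel)"
    using slice_measurable_compose(2)[OF slice_measurable_square[OF f]]
    by (intro nn_integral_cong nn_integral_multc) simp
  also have "\<dots> = (\<integral>\<^sup>+\<tau>'. slice_sq f (k-k') * ennreal ((g \<tau>' k')^2) \<partial>lborel)"
    unfolding slice_sq_def by (simp add: nn_integral_lborel_translate[OF fm])
  also have "\<dots> = slice_sq f (k - k') * slice_sq g k'"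
    unfolding slice_sq_def
    by (rule nn_integral_cmult) (use slice_measurable_square[OF g] in \<open>simp add: slice_measurable_def\<close>)
  finally show ?thesis .
qed

lemma sq_conv_measurable:
  "slice_measurable F \<Longrightarrow> slice_measurable G \<Longrightarrow> (\<lambda>\<tau>. sq_conv F G \<tau> k k') \<in> borel_measurable borel"
  unfolding sq_conv_def by (intro prod_conv_measurable slice_measurable_square)

text \<open>Here \<open>f, g\<close> are the weighted functions and \<open>ku, kv\<close> the
  reciprocal weights; the convolution of \<open>f ku\<close> and \<open>g kv\<close> is estimated through the
  time kernel \<open>sq_conv ku kv\<close>.\<close>

context
  fixes f g ku kv :: "real \<Rightarrow> int \<Rightarrow> real"
  assumes nonneg: "\<And>\<tau> j. 0 \<le> f \<tau> j" "\<And>\<tau> j. 0 \<le> g \<tau> j" "\<And>\<tau> j. 0 \<le> ku \<tau> j" "\<And>\<tau> j. 0 \<le> kv \<tau> j"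
    and meas: "slice_measurable f" "slice_measurable g" "slice_measurable ku" "slice_measurable kv"
begin

text \<open>Cauchy--Schwarz in \<open>\<tau>'\<close> separates the functions from the weights.\<close>

lemma prod_conv_cauchy_schwarz:
  "prod_conv (\<lambda>s j. f s j * ku s j) (\<lambda>s j. g s j * kv s j) \<tau> k k'
     \<le> ennsqrt (sq_conv f g \<tau> k k') * ennsqrt (sq_conv ku kv \<tau> k k')"
proof -
  have "prod_conv (\<lambda>s j. f s j * ku s j) (\<lambda>s j. g s j * kv s j) \<tau> k k'
      = (\<integral>\<^sup>+\<tau>'. ennreal (f (\<tau>-\<tau>') (k-k') * g \<tau>' k') * ennreal (ku (\<tau>-\<tau>') (k-k') * kv \<tau>' k') \<partial>lborel)"
    unfolding prod_conv_def
    by (intro nn_integral_cong) (simp add: ennreal_mult[symmetric] nonneg mult_ac)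
  also have "\<dots> \<le> ennsqrt (\<integral>\<^sup>+\<tau>'. (ennreal (f (\<tau>-\<tau>') (k-k') * g \<tau>' k'))^2 \<partial>lborel)
                 * ennsqrt (\<integral>\<^sup>+\<tau>'. (ennreal (ku (\<tau>-\<tau>') (k-k') * kv \<tau>' k'))^2 \<partial>lborel)"
    using meas[THEN slice_measurable_compose(1)] meas[unfolded slice_measurable_def]
    by (intro Cauchy_Schwarz_ennsqrt measurable_compose[OF _ measurable_ennreal] borel_measurable_times)
       simp_all
  also have "\<dots> = ennsqrt (sq_conv f g \<tau> k k') * ennsqrt (sq_conv ku kv \<tau> k k')"
    unfolding sq_conv_def prod_conv_def
    by (simp add: ennreal_power nonneg power_mult_distrib)
  finally show ?thesis .
qed

text \<open>A row \<open>k\<close> whose kernel is summable in \<open>k'\<close>: Cauchy--Schwarz in \<open>k'\<close>.\<close>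

lemma row_bound_summable_kernel:
  assumes "(\<integral>\<^sup>+k'. sq_conv ku kv \<tau> k k' \<partial>count_space UNIV) \<le> ennreal C0"
  shows "(\<integral>\<^sup>+k'. prod_conv (\<lambda>s j. f s j * ku s j) (\<lambda>s j. g s j * kv s j) \<tau> k k' \<partial>count_space UNIV)^2
           \<le> ennreal C0 * (\<integral>\<^sup>+k'. sq_conv f g \<tau> k k' \<partial>count_space UNIV)"
proof -
  have "(\<integral>\<^sup>+k'. prod_conv (\<lambda>s j. f s j * ku s j) (\<lambda>s j. g s j * kv s j) \<tau> k k' \<partial>count_space UNIV)^2
      \<le> (\<integral>\<^sup>+k'. ennsqrt (sq_conv f g \<tau> k k') * ennsqrt (sq_conv ku kv \<tau> k k') \<partial>count_space UNIV)^2"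
    by (subst ennreal_sq_le_iff) (intro nn_integral_mono prod_conv_cauchy_schwarz)
  also have "\<dots> \<le> (\<integral>\<^sup>+k'. sq_conv f g \<tau> k k' \<partial>count_space UNIV) * (\<integral>\<^sup>+k'. sq_conv ku kv \<tau> k k' \<partial>count_space UNIV)"
    using Cauchy_Schwarz_nn_integral[of "\<lambda>k'. ennsqrt (sq_conv f g \<tau> k k')" "count_space UNIV"
        "\<lambda>k'. ennsqrt (sq_conv ku kv \<tau> k k')"] by simp
  also have "\<dots> \<le> (\<integral>\<^sup>+k'. sq_conv f g \<tau> k k' \<partial>count_space UNIV) * ennreal C0"
    using assms by (rule mult_left_mono) simp
  finally show ?thesis by (simp add: mult.commute)
qed

text \<open>A row \<open>k\<close> with only a uniformly bounded kernel: Minkowski in \<open>k'\<close> followed by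
  Cauchy--Schwarz still bounds it by the full product of norms.\<close>

lemma row_bound_bounded_kernel:
  assumes bounded: "\<And>\<tau> k'. sq_conv ku kv \<tau> k k' \<le> ennreal C1"
  shows "(\<integral>\<^sup>+\<tau>. (\<integral>\<^sup>+k'. prod_conv (\<lambda>s j. f s j * ku s j) (\<lambda>s j. g s j * kv s j) \<tau> k k' \<partial>count_space UNIV)^2 \<partial>lborel)
           \<le> ennreal C1 * sq_norm f * sq_norm g"
proof -
  define I where "I \<tau> k' = prod_conv (\<lambda>s j. f s j * ku s j) (\<lambda>s j. g s j * kv s j) \<tau> k k'" for \<tau> k'
  define a where "a k' = ennsqrt (slice_sq f (k - k')) * ennsqrt (slice_sq g k')" for k'
  have Im: "(\<lambda>\<tau>. I \<tau> k') \<in> borel_measurable borel" for k'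
    unfolding I_def by (intro prod_conv_measurable slice_measurable_times meas)
  have I_L2: "ennsqrt (\<integral>\<^sup>+\<tau>. (I \<tau> k')^2 \<partial>lborel) \<le> ennsqrt (ennreal C1) * a k'" for k'
  proof -
    have "(I \<tau> k')^2 \<le> sq_conv f g \<tau> k k' * ennreal C1" for \<tau>
    proof -
      have "(I \<tau> k')^2 \<le> (ennsqrt (sq_conv f g \<tau> k k') * ennsqrt (sq_conv ku kv \<tau> k k'))^2"
        unfolding I_def ennreal_sq_le_iff by (rule prod_conv_cauchy_schwarz)
      also have "\<dots> \<le> sq_conv f g \<tau> k k' * ennreal C1"
        by (simp add: power_mult_distrib mult_left_mono bounded)
      finally show ?thesis .
    qed
    then have "(\<integral>\<^sup>+\<tau>. (I \<tau> k')^2 \<partial>lborel) \<le> (\<integral>\<^sup>+\<tau>. sq_conv f g \<tau> k k' * ennreal C1 \<partial>lborel)"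
      by (intro nn_integral_mono)
    also have "\<dots> = (\<integral>\<^sup>+\<tau>. sq_conv f g \<tau> k k' \<partial>lborel) * ennreal C1"
      by (rule nn_integral_multc) (simp add: sq_conv_measurable meas)
    also have "\<dots> = ennreal C1 * (slice_sq f (k - k') * slice_sq g k')"
      by (simp add: sq_conv_time_integral meas mult.commute)
    finally show ?thesis unfolding a_def ennsqrt_mult[symmetric] ennsqrt_le_iff .
  qed
  have "(\<integral>\<^sup>+\<tau>. (\<integral>\<^sup>+k'. I \<tau> k' \<partial>count_space UNIV)^2 \<partial>lborel)
      = (\<integral>\<^sup>+k'. \<integral>\<^sup>+l. \<integral>\<^sup>+\<tau>. I \<tau> k' * I \<tau> l \<partial>lborel \<partial>count_space UNIV \<partial>count_space UNIV)"
    unfolding nn_integral_count_space_square using Im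
    by (subst nn_integral_count_space_nn_integral,
        auto intro!: nn_integral_count_space_measurable nn_integral_cong nn_integral_count_space_nn_integral)
  also have "\<dots> \<le> (\<integral>\<^sup>+k'. \<integral>\<^sup>+l. (ennsqrt (ennreal C1) * a k') * (ennsqrt (ennreal C1) * a l)
                    \<partial>count_space UNIV \<partial>count_space UNIV)"
    using Im by (intro nn_integral_mono order_trans[OF Cauchy_Schwarz_ennsqrt] mult_mono I_L2) simp_all
  also have "\<dots> = ennreal C1 * (\<integral>\<^sup>+k'. a k' \<partial>count_space UNIV)^2"
    unfolding nn_integral_count_space_square[symmetric]
    by (simp add: nn_integral_cmult power_mult_distrib)
  also have "\<dots> \<le> ennreal C1 * (sq_norm f * sq_norm g)"
  proof (rule mult_left_mono)
    show "(\<integral>\<^sup>+k'. a k' \<partial>count_space UNIV)^2 \<le> sq_norm f * sq_norm g"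
      using Cauchy_Schwarz_nn_integral[of "\<lambda>k'. ennsqrt (slice_sq f (k - k'))" "count_space UNIV"
          "\<lambda>k'. ennsqrt (slice_sq g k')"]
      by (simp add: a_def sq_norm_def nn_integral_int_reflect[where h="slice_sq f"])
  qed simp
  finally show ?thesis unfolding I_def by (simp add: mult.assoc)
qed

text \<open>Schur test with at most one exceptional row: good rows are controlled by the summable
  kernel, the single exceptional row by the uniform bound.\<close>

lemma schur_bilinear_bound:
  assumes bounded: "\<And>\<tau> k k'. sq_conv ku kv \<tau> k k' \<le> ennreal C1"
    and summable: "\<And>\<tau> k. k \<notin> E \<Longrightarrow> (\<integral>\<^sup>+k'. sq_conv ku kv \<tau> k k' \<partial>count_space UNIV) \<le> ennreal C0"
    and exceptional: "\<And>k1 k2. k1 \<in> E \<Longrightarrow> k2 \<in> E \<Longrightarrow> k1 = k2"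
    and "0 \<le> C0" "0 \<le> C1"
  shows "(\<integral>\<^sup>+k. \<integral>\<^sup>+\<tau>. (\<integral>\<^sup>+k'. prod_conv (\<lambda>s j. f s j * ku s j) (\<lambda>s j. g s j * kv s j) \<tau> k k'
              \<partial>count_space UNIV)^2 \<partial>lborel \<partial>count_space UNIV)
           \<le> ennreal (C0 + C1) * sq_norm f * sq_norm g"
proof -
  define R where "R k = (\<integral>\<^sup>+\<tau>. (\<integral>\<^sup>+k'. prod_conv (\<lambda>s j. f s j * ku s j) (\<lambda>s j. g s j * kv s j) \<tau> k k'
              \<partial>count_space UNIV)^2 \<partial>lborel)" for k
  define D where "D k = (\<integral>\<^sup>+k'. slice_sq f (k - k') * slice_sq g k' \<partial>count_space UNIV)" for k
  have row: "R k \<le> ennreal C0 * D k + (ennreal C1 * sq_norm f * sq_norm g) * indicator E k" for k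
  proof (cases "k \<in> E")
    case True
    then show ?thesis
      using row_bound_bounded_kernel[OF bounded] by (simp add: R_def add_increasing)
  next
    case False
    have "R k \<le> (\<integral>\<^sup>+\<tau>. ennreal C0 * (\<integral>\<^sup>+k'. sq_conv f g \<tau> k k' \<partial>count_space UNIV) \<partial>lborel)"
      unfolding R_def by (intro nn_integral_mono row_bound_summable_kernel summable False)
    also have "\<dots> = ennreal C0 * (\<integral>\<^sup>+\<tau>. \<integral>\<^sup>+k'. sq_conv f g \<tau> k k' \<partial>count_space UNIV \<partial>lborel)"
      by (rule nn_integral_cmult)
         (simp add: nn_integral_count_space_measurable sq_conv_measurable meas)
    also have "\<dots> = ennreal C0 * D k"
      by (simp add: D_def nn_integral_count_space_nn_integral sq_conv_measurable meas
          sq_conv_time_integral)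
    finally show ?thesis using False by simp
  qed
  have at_most_one: "emeasure (count_space UNIV) E \<le> 1"
  proof (cases "E = {}")
    case False
    then obtain k0 where "k0 \<in> E" by auto
    then have "E = {k0}" using exceptional by auto
    then show ?thesis by simp
  qed simp
  have "(\<integral>\<^sup>+k. R k \<partial>count_space UNIV)
      \<le> (\<integral>\<^sup>+k. ennreal C0 * D k + (ennreal C1 * sq_norm f * sq_norm g) * indicator E k \<partial>count_space UNIV)"
    by (intro nn_integral_mono row)
  also have "\<dots> = ennreal C0 * (sq_norm f * sq_norm g)
                  + ennreal C1 * sq_norm f * sq_norm g * emeasure (count_space UNIV) E"
    by (simp add: nn_integral_add nn_integral_cmult D_def nn_integral_int_convolution sq_norm_def)
  also have "\<dots> \<le> ennreal C0 * (sq_norm f * sq_norm g) + ennreal C1 * sq_norm f * sq_norm g"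
    using mult_left_mono[OF at_most_one, of "ennreal C1 * sq_norm f * sq_norm g"]
    by (simp add: add_left_mono)
  also have "\<dots> = ennreal (C0 + C1) * sq_norm f * sq_norm g"
    using assms(4,5) by (simp add: ennreal_plus distrib_right mult.assoc)
  finally show ?thesis unfolding R_def .
qed

end

lemma weighted_convolution_estimate:
  fixes wu wv :: "real \<Rightarrow> int \<Rightarrow> real" and u v :: "real \<Rightarrow> int \<Rightarrow> complex"
  assumes pos: "\<And>\<tau> j. 0 < wu \<tau> j" "\<And>\<tau> j. 0 < wv \<tau> j"
    and wmeas: "slice_measurable wu" "slice_measurable wv"
    and umeas: "\<forall>k. (\<lambda>\<tau>. u \<tau> k) \<in> borel_measurable lborel"
    and vmeas: "\<forall>k. (\<lambda>\<tau>. v \<tau> k) \<in> borel_measurable lborel"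
    and bounded: "\<And>\<tau> k k'. sq_conv (\<lambda>s j. 1 / wu s j) (\<lambda>s j. 1 / wv s j) \<tau> k k' \<le> ennreal C1"
    and summable: "\<And>\<tau> k. k \<notin> E \<Longrightarrow>
          (\<integral>\<^sup>+k'. sq_conv (\<lambda>s j. 1 / wu s j) (\<lambda>s j. 1 / wv s j) \<tau> k k' \<partial>count_space UNIV) \<le> ennreal C0"
    and exceptional: "\<And>k1 k2. k1 \<in> E \<Longrightarrow> k2 \<in> E \<Longrightarrow> k1 = k2"
    and C: "0 \<le> C0" "0 \<le> C1"
  shows "l2L2e (absconv u v)
           \<le> ennreal (sqrt (C0 + C1)) * l2L2 (\<lambda>\<tau> k. complex_of_real (wu \<tau> k) * u \<tau> k)
                                      * l2L2 (\<lambda>\<tau> k. complex_of_real (wv \<tau> k) * v \<tau> k)"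
proof -
  define f where "f s j = wu s j * cmod (u s j)" for s j
  define g where "g s j = wv s j * cmod (v s j)" for s j
  have meas: "slice_measurable f" "slice_measurable g"
    "slice_measurable (\<lambda>s j. 1 / wu s j)" "slice_measurable (\<lambda>s j. 1 / wv s j)"
    using wmeas umeas vmeas unfolding f_def g_def slice_measurable_def
    by (auto intro!: borel_measurable_times borel_measurable_divide
        measurable_compose[OF _ borel_measurable_norm])
  have absconv_eq: "absconv u v \<tau> k = (\<integral>\<^sup>+k'. prod_conv (\<lambda>s j. f s j * (1 / wu s j))
                       (\<lambda>s j. g s j * (1 / wv s j)) \<tau> k k' \<partial>count_space UNIV)" for \<tau> k
    unfolding absconv_def prod_conv_def f_def g_def
    using pos by (simp add: less_imp_neq[symmetric])
  have norm_f: "l2L2 (\<lambda>\<tau> k. complex_of_real (wu \<tau> k) * u \<tau> k) = ennsqrt (sq_norm f)"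
    and norm_g: "l2L2 (\<lambda>\<tau> k. complex_of_real (wv \<tau> k) * v \<tau> k) = ennsqrt (sq_norm g)"
    unfolding l2L2_def sq_norm_def slice_sq_def f_def g_def
    using pos by (simp_all add: norm_mult less_imp_le)
  have "l2L2e (absconv u v) \<le> ennsqrt (ennreal (C0 + C1) * sq_norm f * sq_norm g)"
    unfolding l2L2e_def absconv_eq ennsqrt_le_iff
    by (rule schur_bilinear_bound[OF _ _ _ _ meas bounded summable exceptional C])
       (use pos in \<open>simp_all add: f_def g_def less_imp_le\<close>)
  then show ?thesis
    using C by (simp add: ennsqrt_mult ennsqrt_ennreal norm_f norm_g del: ennreal_plus)
qed

lemma nn_integral_even_le:
  fixes g :: "real \<Rightarrow> ennreal"
  assumes gm: "g \<in> borel_measurable borel" and even: "\<And>x. g (-x) = g x"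
  shows "(\<integral>\<^sup>+x. g x \<partial>lborel) \<le> 2 * (\<integral>\<^sup>+x. g x * indicator {0..} x \<partial>lborel)"
proof -
  have "(\<integral>\<^sup>+x. g x \<partial>lborel) = (\<integral>\<^sup>+x. g x * indicator {0..} x + g x * indicator {..<0} x \<partial>lborel)"
    by (intro nn_integral_cong) (auto simp: indicator_def)
  also have "\<dots> = (\<integral>\<^sup>+x. g x * indicator {0..} x \<partial>lborel) + (\<integral>\<^sup>+x. g x * indicator {..<0} x \<partial>lborel)"
    by (rule nn_integral_add) (use gm in auto)
  also have "(\<integral>\<^sup>+x. g x * indicator {..<0} x \<partial>lborel)
           = (\<integral>\<^sup>+x. g (0 + (-1) * x) * indicator {..<0} (0 + (-1) * x) \<partial>lborel)"
    using nn_integral_real_affine[of "\<lambda>x. g x * indicator {..<0} x" "-1" 0] gm by simp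
  also have "\<dots> \<le> (\<integral>\<^sup>+x. g x * indicator {0..} x \<partial>lborel)"
    by (intro nn_integral_mono) (auto simp: even indicator_def)
  finally show ?thesis by (simp add: mult_2 add_mono)
qed

lemma nn_integral_abs_powr_near_zero:
  fixes r c :: real
  assumes r: "0 < r" "r < 1" and c: "0 < c"
  shows "(\<integral>\<^sup>+y. ennreal (\<bar>y\<bar> powr (-r) * indicator {y. \<bar>y\<bar> < c} y) \<partial>lborel)
           \<le> ennreal (2 * (c powr (1-r) / (1-r)))"
proof -
  have "(\<integral>\<^sup>+y. ennreal (\<bar>y\<bar> powr (-r) * indicator {y. \<bar>y\<bar> < c} y) \<partial>lborel)
      \<le> 2 * (\<integral>\<^sup>+y. ennreal (\<bar>y\<bar> powr (-r) * indicator {y. \<bar>y\<bar> < c} y) * indicator {0..} y \<partial>lborel)"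
    by (rule nn_integral_even_le) (auto simp: indicator_def)
  also have "(\<integral>\<^sup>+y. ennreal (\<bar>y\<bar> powr (-r) * indicator {y. \<bar>y\<bar> < c} y) * indicator {0..} y \<partial>lborel)
      \<le> (\<integral>\<^sup>+y. ennreal (indicator {0..c} y * y powr (-r)) \<partial>lborel)"
    by (intro nn_integral_mono) (auto simp: indicator_def)
  also have "\<dots> = ennreal (c powr (-r + 1) / (-r + 1))"
    by (rule nn_integral_has_integral_lebesgue) (use has_integral_powr_from_0[of "-r" c] r c in auto)
  also have "2 * ennreal (c powr (-r + 1) / (-r + 1)) = ennreal (2 * (c powr (1-r) / (1-r)))"
    using r by (subst ennreal_mult) (auto simp: add.commute)
  finally show ?thesis by (simp add: mult_left_mono)
qed

lemma nn_integral_abs_powr_tail: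
  fixes s d :: real
  assumes s: "1 < s" and d: "0 < d"
  shows "(\<integral>\<^sup>+y. ennreal (\<bar>y\<bar> powr (-s) * indicator {y. d \<le> \<bar>y\<bar>} y) \<partial>lborel)
           \<le> ennreal (2 * (d powr (1-s) / (s-1)))"
proof -
  have "(\<integral>\<^sup>+y. ennreal (\<bar>y\<bar> powr (-s) * indicator {y. d \<le> \<bar>y\<bar>} y) \<partial>lborel)
      \<le> 2 * (\<integral>\<^sup>+y. ennreal (\<bar>y\<bar> powr (-s) * indicator {y. d \<le> \<bar>y\<bar>} y) * indicator {0..} y \<partial>lborel)"
    by (rule nn_integral_even_le) (auto simp: indicator_def)
  also have "(\<integral>\<^sup>+y. ennreal (\<bar>y\<bar> powr (-s) * indicator {y. d \<le> \<bar>y\<bar>} y) * indicator {0..} y \<partial>lborel)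
      \<le> (\<integral>\<^sup>+y. ennreal (indicator {d..} y * y powr (-s)) \<partial>lborel)"
    by (intro nn_integral_mono) (use d in \<open>auto simp: indicator_def\<close>)
  also have "\<dots> = ennreal (-(d powr (-s + 1)) / (-s + 1))"
    by (rule nn_integral_has_integral_lebesgue) (use has_integral_powr_to_inf[of "-s" d] s d in auto)
  also have "2 * ennreal (-(d powr (-s + 1)) / (-s + 1)) = ennreal (2 * (d powr (1-s) / (s-1)))"
    using s by (subst ennreal_mult) (auto simp: add.commute minus_divide_right)
  finally show ?thesis by (simp add: mult_left_mono)
qed

lemma japanese_ge_one: "1 \<le> japanese y"
  unfolding japanese_def by simp

lemma japanese_ge_abs: "\<bar>y\<bar> \<le> japanese y"
  unfolding japanese_def by (simp add: real_le_rsqrt)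

lemma japanese_pos: "0 < japanese y"
  using japanese_ge_one[of y] by linarith

lemma japanese_nonzero [simp]: "japanese y \<noteq> 0"
  using japanese_pos[of y] by simp

lemma japanese_measurable [measurable]: "japanese \<in> borel_measurable borel"
  unfolding japanese_def by measurable

lemma powr_neg_antimono: "0 < r \<Longrightarrow> 0 < a \<Longrightarrow> a \<le> b \<Longrightarrow> b powr (-r) \<le> a powr (-r)"
  for r a b :: real
  using powr_mono2'[of "-r" a b] by auto

text \<open>Far field \<open>|x| \<ge> 2 max 1 |X|\<close>: both brackets are comparable to \<open>|x|\<close>.\<close>

lemma japanese_product_far:
  fixes r X x R :: real
  assumes r: "0 < r" and R: "1 \<le> R" "\<bar>X\<bar> \<le> R" and far: "2*R \<le> \<bar>x\<bar>"
  shows "japanese (X - x) powr (-r) * japanese x powr (-r) \<le> 2 powr r * \<bar>x\<bar> powr (-2*r)"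
proof -
  have x0: "0 < \<bar>x\<bar>" using R far by linarith
  have "\<bar>x\<bar>/2 \<le> japanese (X - x)"
    using far R japanese_ge_abs[of "X - x"] by linarith
  then have "japanese (X - x) powr (-r) \<le> (\<bar>x\<bar>/2) powr (-r)"
    using x0 by (intro powr_neg_antimono r) auto
  also have "\<dots> = 2 powr r * \<bar>x\<bar> powr (-r)"
    by (simp add: powr_divide powr_minus divide_simps)
  finally have "japanese (X - x) powr (-r) * japanese x powr (-r) \<le> 2 powr r * \<bar>x\<bar> powr (-r) * \<bar>x\<bar> powr (-r)"
    using japanese_ge_abs[of x] x0 r by (intro mult_mono powr_neg_antimono) auto
  then show ?thesis by (simp add: mult.assoc powr_add[symmetric])
qed

text \<open>Everywhere one of \<open>\<langle>x\<rangle>\<close>, \<open>\<langle>X - x\<rangle>\<close> is at least \<open>max 1 |X| / 2\<close>.\<close>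

lemma japanese_product_near:
  fixes r X x :: real
  assumes r: "0 < r" and x0: "x \<noteq> 0" and xX: "x \<noteq> X"
  shows "japanese (X - x) powr (-r) * japanese x powr (-r)
           \<le> (max 1 \<bar>X\<bar> / 2) powr (-r) * (\<bar>x\<bar> powr (-r) + \<bar>X - x\<bar> powr (-r))"
proof -
  define B where "B = (max 1 \<bar>X\<bar> / 2) powr (-r)"
  have B: "0 \<le> B" by (simp add: B_def)
  have small_x: "japanese x powr (-r) \<le> \<bar>x\<bar> powr (-r)"
    and small_Xx: "japanese (X - x) powr (-r) \<le> \<bar>X - x\<bar> powr (-r)"
    using r x0 xX japanese_ge_abs by (auto intro: powr_neg_antimono)
  have "max 1 \<bar>X\<bar> / 2 \<le> japanese x \<or> max 1 \<bar>X\<bar> / 2 \<le> japanese (X - x)"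
    using japanese_ge_abs[of x] japanese_ge_abs[of "X - x"] japanese_ge_one[of x] by (auto simp: max_def)
  then have "japanese x powr (-r) \<le> B \<or> japanese (X - x) powr (-r) \<le> B"
    unfolding B_def by (auto intro: powr_neg_antimono[OF r])
  moreover have "japanese (X - x) powr (-r) * japanese x powr (-r) \<le> B * \<bar>X - x\<bar> powr (-r)"
    if "japanese x powr (-r) \<le> B"
    using mult_mono[OF small_Xx that] by (simp add: mult.commute)
  moreover have "japanese (X - x) powr (-r) * japanese x powr (-r) \<le> B * \<bar>x\<bar> powr (-r)"
    if "japanese (X - x) powr (-r) \<le> B"
    using mult_mono[OF that small_x B] by simp
  ultimately have "japanese (X - x) powr (-r) * japanese x powr (-r) \<le> B * \<bar>X - x\<bar> powr (-r)
           \<or> japanese (X - x) powr (-r) * japanese x powr (-r) \<le> B * \<bar>x\<bar> powr (-r)"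
    by blast
  moreover have "B * \<bar>X - x\<bar> powr (-r) \<le> B * (\<bar>x\<bar> powr (-r) + \<bar>X - x\<bar> powr (-r))"
    and "B * \<bar>x\<bar> powr (-r) \<le> B * (\<bar>x\<bar> powr (-r) + \<bar>X - x\<bar> powr (-r))"
    using B by (intro mult_left_mono; simp)+
  ultimately show ?thesis
    unfolding B_def[symmetric] by linarith
qed

text \<open>Pointwise majorant of the one-dimensional kernel by a far-field tail (where \<open>\<langle>X - x\<rangle> \<approx> |x|\<close>)
  and two local singularities at \<open>0\<close> and \<open>X\<close>, each of which can be integrated explicitly.\<close>

lemma japanese_product_split:
  fixes r X x R :: real
  assumes r: "0 < r" and R: "R = max 1 \<bar>X\<bar>" and x0: "x \<noteq> 0" and xX: "x \<noteq> X"
  shows "japanese (X - x) powr (-r) * japanese x powr (-r)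
    \<le> 2 powr r * (\<bar>x\<bar> powr (-2*r) * indicator {x. 2*R \<le> \<bar>x\<bar>} x)
      + (R/2) powr (-r) * (\<bar>x\<bar> powr (-r) * indicator {x. \<bar>x\<bar> < 2*R} x
                           + \<bar>X-x\<bar> powr (-r) * indicator {x. \<bar>X-x\<bar> < 3*R} x)"
    (is "?L \<le> ?tail + ?B * (?near0 + ?nearX)")
proof (cases "2*R \<le> \<bar>x\<bar>")
  case True
  have "?L \<le> ?tail"
    using japanese_product_far[OF r _ _ True, of X] R True by (simp add: indicator_def)
  moreover have "0 \<le> ?B * (?near0 + ?nearX)" by simp
  ultimately show ?thesis by linarith
next
  case False
  then have "\<bar>X-x\<bar> < 3*R" using R by linarith
  then show ?thesis
    using japanese_product_near[OF r x0 xX] False R by (simp add: indicator_def)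
qed

definition japanese_conv_const :: "real \<Rightarrow> real" where
  "japanese_conv_const r = 2 powr r * (2 * 2 powr (1-2*r) / (2*r-1))
                         + 2 powr r * (2 * 2 powr (1-r) / (1-r) + 2 * 3 powr (1-r) / (1-r))"

lemma japanese_conv_const_nonneg: "1/2 < r \<Longrightarrow> r < 1 \<Longrightarrow> 0 \<le> japanese_conv_const r"
  unfolding japanese_conv_const_def
  by (intro add_nonneg_nonneg mult_nonneg_nonneg divide_nonneg_nonneg) auto

lemma japanese_conv_const_scaling:
  fixes r R :: real
  assumes "0 < R"
  shows "2 powr r * (2 * ((2*R) powr (1-2*r) / (2*r-1)))
           + ((R/2) powr (-r) * (2 * ((2*R) powr (1-r) / (1-r))) + (R/2) powr (-r) * (2 * ((3*R) powr (1-r) / (1-r))))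
         = japanese_conv_const r * R powr (1-2*r)"
proof -
  have RR: "R powr (-r) * R powr (1-r) = R powr (1-2*r)"
    by (simp add: powr_add[symmetric])
  have B: "(R/2) powr (-r) = 2 powr r * R powr (-r)"
    using assms by (simp add: powr_divide powr_minus divide_simps)
  have e1: "(R/2) powr (-r) * (2 * ((2*R) powr (1-r) / (1-r)))
          = (2 powr r * (2 * 2 powr (1-r) / (1-r))) * (R powr (-r) * R powr (1-r))"
    unfolding B powr_mult by (simp add: field_simps)
  have e2: "(R/2) powr (-r) * (2 * ((3*R) powr (1-r) / (1-r)))
          = (2 powr r * (2 * 3 powr (1-r) / (1-r))) * (R powr (-r) * R powr (1-r))"
    unfolding B powr_mult by (simp add: field_simps)
  have e3: "2 powr r * (2 * ((2*R) powr (1-2*r) / (2*r-1)))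
          = (2 powr r * (2 * 2 powr (1-2*r) / (2*r-1))) * R powr (1-2*r)"
    unfolding powr_mult by (simp add: field_simps)
  show ?thesis
    unfolding e1 e2 e3 RR japanese_conv_const_def
    by (simp add: distrib_right distrib_left add_divide_distrib)
qed

lemma japanese_convolution_bound:
  fixes r X :: real
  assumes r: "1/2 < r" "r < 1"
  shows "(\<integral>\<^sup>+x. ennreal (japanese (X - x) powr (-r) * japanese x powr (-r)) \<partial>lborel)
           \<le> ennreal (japanese_conv_const r * (max 1 \<bar>X\<bar>) powr (1-2*r))"
proof -
  define R where "R = max 1 \<bar>X\<bar>"
  have R1: "1 \<le> R" by (simp add: R_def)
  define B where "B = (R/2) powr (-r)"
  define tail where "tail x = \<bar>x\<bar> powr (-2*r) * indicator {x. 2*R \<le> \<bar>x\<bar>} x" for x :: real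
  define near0 where "near0 x = \<bar>x\<bar> powr (-r) * indicator {x. \<bar>x\<bar> < 2*R} x" for x :: real
  define nearX where "nearX x = \<bar>X-x\<bar> powr (-r) * indicator {x. \<bar>X-x\<bar> < 3*R} x" for x :: real
  have nonneg: "0 \<le> B" "0 \<le> tail x" "0 \<le> near0 x" "0 \<le> nearX x" for x
    by (simp_all add: B_def tail_def near0_def nearX_def)
  have meas: "(\<lambda>x. ennreal (tail x)) \<in> borel_measurable lborel"
    "(\<lambda>x. ennreal (near0 x)) \<in> borel_measurable lborel" "(\<lambda>x. ennreal (nearX x)) \<in> borel_measurable lborel"
    unfolding tail_def near0_def nearX_def by measurable
  have pointwise: "AE x in lborel. ennreal (japanese (X - x) powr (-r) * japanese x powr (-r))
      \<le> ennreal (2 powr r) * ennreal (tail x) + (ennreal B * ennreal (near0 x) + ennreal B * ennreal (nearX x))"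
    using AE_lborel_singleton[of 0] AE_lborel_singleton[of X]
  proof eventually_elim
    case (elim x)
    have "japanese (X - x) powr (-r) * japanese x powr (-r) \<le> 2 powr r * tail x + B * (near0 x + nearX x)"
      unfolding tail_def B_def near0_def nearX_def
      by (rule japanese_product_split) (use r elim R_def in auto)
    then have "ennreal (japanese (X - x) powr (-r) * japanese x powr (-r))
        \<le> ennreal (2 powr r * tail x + B * (near0 x + nearX x))"
      by (rule ennreal_leI)
    then show ?case
      using nonneg by (simp add: ennreal_plus ennreal_mult distrib_left)
  qed
  have int_nearX: "(\<integral>\<^sup>+x. ennreal (nearX x) \<partial>lborel)
      = (\<integral>\<^sup>+y. ennreal (\<bar>y\<bar> powr (-r) * indicator {y. \<bar>y\<bar> < 3*R} y) \<partial>lborel)"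
    using nn_integral_real_affine[of "\<lambda>y. ennreal (\<bar>y\<bar> powr (-r) * indicator {y. \<bar>y\<bar> < 3*R} y)" "-1" X]
    by (simp add: nearX_def indicator_def)
  have "(\<integral>\<^sup>+x. ennreal (japanese (X - x) powr (-r) * japanese x powr (-r)) \<partial>lborel)
      \<le> ennreal (2 powr r) * (\<integral>\<^sup>+x. ennreal (tail x) \<partial>lborel)
         + (ennreal B * (\<integral>\<^sup>+x. ennreal (near0 x) \<partial>lborel) + ennreal B * (\<integral>\<^sup>+x. ennreal (nearX x) \<partial>lborel))"
    using nn_integral_mono_AE[OF pointwise] meas by (simp add: nn_integral_add nn_integral_cmult)
  also have "\<dots> \<le> ennreal (2 powr r) * ennreal (2 * ((2*R) powr (1-2*r) / (2*r-1)))
      + (ennreal B * ennreal (2 * ((2*R) powr (1-r) / (1-r))) + ennreal B * ennreal (2 * ((3*R) powr (1-r) / (1-r))))"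
    using nn_integral_abs_powr_tail[of "2*r" "2*R"] nn_integral_abs_powr_near_zero[of r "2*R"]
      nn_integral_abs_powr_near_zero[of r "3*R"] r R1
    by (intro add_mono mult_left_mono) (simp_all add: tail_def near0_def int_nearX)
  also have "\<dots> = ennreal (2 powr r * (2 * ((2*R) powr (1-2*r) / (2*r-1)))
      + (B * (2 * ((2*R) powr (1-r) / (1-r))) + B * (2 * ((3*R) powr (1-r) / (1-r)))))"
  proof -
    have "ennreal p * ennreal a + (ennreal B * ennreal b + ennreal B * ennreal c)
        = ennreal (p * a + (B * b + B * c))" if "0 \<le> p" "0 \<le> a" "0 \<le> b" "0 \<le> c" for p a b c
      using that nonneg(1) by (simp add: ennreal_plus ennreal_mult)
    then show ?thesis using r R1 by simp
  qed
  also have "\<dots> = ennreal (japanese_conv_const r * R powr (1-2*r))"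
    using japanese_conv_const_scaling[of R r] R1 by (simp only: B_def)
  finally show ?thesis unfolding R_def .
qed

definition quad_separated :: "real \<Rightarrow> int set \<Rightarrow> (int \<Rightarrow> real) \<Rightarrow> bool" where
  "quad_separated c S y \<longleftrightarrow> (\<forall>n\<in>S. \<forall>m\<in>S. c * (of_int (n - m))^2 \<le> \<bar>y n - y m\<bar>)"

definition sep_profile :: "real \<Rightarrow> real \<Rightarrow> int \<Rightarrow> real" where
  "sep_profile c \<sigma> d = (if d = 0 then 1 else (c * (of_int d)^2 / 2) powr (-\<sigma>))"

lemma nn_integral_int_split_nat:
  fixes h :: "int \<Rightarrow> ennreal"
  shows "(\<integral>\<^sup>+d. h d \<partial>count_space UNIV)
       = (\<integral>\<^sup>+j. h (int j) \<partial>count_space UNIV) + (\<integral>\<^sup>+j. h (- int j - 1) \<partial>count_space UNIV)"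
proof -
  have "(\<integral>\<^sup>+d. h d \<partial>count_space UNIV)
      = (\<integral>\<^sup>+d. h d * indicator {0..} d + h d * indicator {..<0} d \<partial>count_space UNIV)"
    by (intro nn_integral_cong) (auto simp: indicator_def)
  also have "\<dots> = (\<integral>\<^sup>+d. h d \<partial>count_space {0..}) + (\<integral>\<^sup>+d. h d \<partial>count_space {..<0})"
    by (simp add: nn_integral_add nn_integral_count_space_indicator)
  also have "(\<integral>\<^sup>+d. h d \<partial>count_space {0..}) = (\<integral>\<^sup>+j. h (int j) \<partial>count_space UNIV)"
    by (rule nn_integral_bij_count_space[symmetric])
       (auto simp: bij_betw_def inj_on_def image_iff intro!: exI[of _ "nat _"])
  also have "(\<integral>\<^sup>+d. h d \<partial>count_space {..<0}) = (\<integral>\<^sup>+j. h (- int j - 1) \<partial>count_space UNIV)"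
    by (rule nn_integral_bij_count_space[symmetric])
       (auto simp: bij_betw_def inj_on_def image_iff intro!: exI[of _ "nat (- _ - 1)"])
  finally show ?thesis .
qed

lemma sep_profile_sum_finite:
  fixes c \<sigma> :: real
  assumes c: "0 < c" and s: "1/2 < \<sigma>"
  shows "(\<integral>\<^sup>+d. ennreal (sep_profile c \<sigma> d) \<partial>count_space UNIV) \<noteq> top"
proof -
  let ?\<phi> = "sep_profile c \<sigma>"
  have \<phi>_Suc: "?\<phi> (int (Suc j)) = (c/2) powr (-\<sigma>) * real (Suc j) powr (-2*\<sigma>)" for j
  proof -
    have "?\<phi> (int (Suc j)) = (c/2 * (real (Suc j)) powr 2) powr (-\<sigma>)"
      unfolding sep_profile_def by (simp add: powr_realpow del: of_nat_Suc)
    also have "\<dots> = (c/2) powr (-\<sigma>) * real (Suc j) powr (-2*\<sigma>)"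
      unfolding powr_mult powr_powr by (simp del: of_nat_Suc)
    finally show ?thesis .
  qed
  have "summable (\<lambda>j. real j powr (-2*\<sigma>))"
    using s by (simp add: summable_real_powr_iff)
  then have "summable (\<lambda>j. real (Suc j) powr (-2*\<sigma>))"
    by (subst summable_Suc_iff)
  then have sum_Suc: "summable (\<lambda>j. ?\<phi> (int (Suc j)))"
    unfolding \<phi>_Suc by (rule summable_mult)
  then have sum_pos: "summable (\<lambda>j. ?\<phi> (int j))"
    by (subst (asm) summable_Suc_iff) simp
  have "?\<phi> (- int j - 1) = ?\<phi> (int (Suc j))" for j
    unfolding sep_profile_def by (simp add: power2_eq_square algebra_simps)
  then have sum_neg: "summable (\<lambda>j. ?\<phi> (- int j - 1))"
    using sum_Suc by simp
  have "0 \<le> ?\<phi> d" for d by (simp add: sep_profile_def)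
  then show ?thesis
    unfolding nn_integral_int_split_nat nn_integral_count_space_nat
    by (simp add: suminf_ennreal2 sum_pos sum_neg)
qed

text \<open>A quadratically separated family attains the minimum of \<open>|y|\<close>: only finitely many
  indices can have \<open>|y n|\<close> below any given value.\<close>

lemma quad_separated_min:
  assumes c: "0 < c" and sep: "quad_separated c S y" and n0: "n0 \<in> S"
  shows "\<exists>ns\<in>S. \<forall>n\<in>S. \<bar>y ns\<bar> \<le> \<bar>y n\<bar>"
proof -
  define T where "T = {n\<in>S. \<bar>y n\<bar> \<le> \<bar>y n0\<bar>}"
  define M where "M = \<lceil>2 * \<bar>y n0\<bar> / c\<rceil>"
  have "T \<subseteq> {n0 - M .. n0 + M}"
  proof
    fix n assume "n \<in> T"
    then have "n \<in> S" and le: "\<bar>y n\<bar> \<le> \<bar>y n0\<bar>" by (auto simp: T_def)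
    then have "c * (of_int (n - n0))^2 \<le> 2 * \<bar>y n0\<bar>"
      using sep n0 unfolding quad_separated_def by force
    then have "(of_int (n - n0))^2 \<le> 2 * \<bar>y n0\<bar> / c"
      using c by (simp add: field_simps)
    then have "(of_int ((n - n0)^2) :: real) \<le> of_int M"
      unfolding M_def by (smt (verit) of_int_power le_of_int_ceiling)
    then have "(n - n0)^2 \<le> M" by linarith
    moreover have "\<bar>n - n0\<bar> \<le> (n - n0)^2"
    proof (cases "n = n0")
      case False
      then have "\<bar>n - n0\<bar> * 1 \<le> \<bar>n - n0\<bar> * \<bar>n - n0\<bar>"
        by (intro mult_left_mono) auto
      then show ?thesis by (simp add: power2_eq_square abs_mult_self_eq)
    qed simp
    ultimately show "n \<in> {n0 - M .. n0 + M}" by auto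
  qed
  then have T_finite: "finite T" by (rule finite_subset) simp
  have T_nonempty: "T \<noteq> {}" using n0 by (auto simp: T_def)
  define ns where "ns = arg_min_on (\<lambda>n. \<bar>y n\<bar>) T"
  have ns: "ns \<in> T" "\<And>n. n \<in> T \<Longrightarrow> \<bar>y ns\<bar> \<le> \<bar>y n\<bar>"
    using arg_min_if_finite[OF T_finite T_nonempty, of "\<lambda>n. \<bar>y n\<bar>"] unfolding ns_def
    by (auto simp: not_less[symmetric])
  have "\<bar>y ns\<bar> \<le> \<bar>y n\<bar>" if "n \<in> S" for n
    using ns that by (cases "n \<in> T") (auto simp: T_def)
  then show ?thesis using ns(1) by (auto simp: T_def)
qed

text \<open>Uniform bound \<open>\<Sum>\<^sub>n\<^sub>\<in>\<^sub>S \<langle>y\<^sub>n\<rangle>^{-\<sigma>} \<le> C\<close> for quadratically separated families,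
  by comparison with \<open>sep_profile\<close> centred at the minimiser of \<open>|y|\<close>.\<close>

lemma quad_separated_sum_bound:
  fixes c \<sigma> :: real
  assumes c: "0 < c" and s: "1/2 < \<sigma>"
  shows "\<exists>Cs\<ge>0. \<forall>S y. quad_separated c S y \<longrightarrow>
           (\<integral>\<^sup>+n. ennreal (max 1 \<bar>y n\<bar> powr (-\<sigma>)) * indicator S n \<partial>count_space UNIV) \<le> ennreal Cs"
proof (intro exI[of _ "enn2real (\<integral>\<^sup>+d. ennreal (sep_profile c \<sigma> d) \<partial>count_space UNIV)"] conjI allI impI)
  fix S y assume sep: "quad_separated c S y"
  show "(\<integral>\<^sup>+n. ennreal (max 1 \<bar>y n\<bar> powr (-\<sigma>)) * indicator S n \<partial>count_space UNIV)
          \<le> ennreal (enn2real (\<integral>\<^sup>+d. ennreal (sep_profile c \<sigma> d) \<partial>count_space UNIV))"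
  proof (cases "S = {}")
    case False
    then obtain ns where ns: "ns \<in> S" "\<And>n. n \<in> S \<Longrightarrow> \<bar>y ns\<bar> \<le> \<bar>y n\<bar>"
      using quad_separated_min[OF c sep] by blast
    have "max 1 \<bar>y n\<bar> powr (-\<sigma>) \<le> sep_profile c \<sigma> (n - ns)" if n: "n \<in> S" for n
    proof (cases "n = ns")
      case True
      then show ?thesis
        using s powr_neg_antimono[of \<sigma> 1 "max 1 \<bar>y n\<bar>"] by (simp add: sep_profile_def)
    next
      case False
      have "c * (of_int (n - ns))^2 \<le> \<bar>y n - y ns\<bar>"
        using sep n ns(1) unfolding quad_separated_def by blast
      also have "\<dots> \<le> 2 * \<bar>y n\<bar>" using ns(2)[OF n] by linarith
      finally have "(c * (of_int (n - ns))^2 / 2) \<le> max 1 \<bar>y n\<bar>" by simp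
      moreover have "0 < c * (of_int (n - ns))^2 / 2" using False c by simp
      ultimately show ?thesis
        using False s by (simp add: sep_profile_def powr_neg_antimono)
    qed
    then have "(\<integral>\<^sup>+n. ennreal (max 1 \<bar>y n\<bar> powr (-\<sigma>)) * indicator S n \<partial>count_space UNIV)
        \<le> (\<integral>\<^sup>+n. ennreal (sep_profile c \<sigma> (n - ns)) \<partial>count_space UNIV)"
      by (intro nn_integral_mono) (auto simp: indicator_def ennreal_leI)
    then show ?thesis
      using sep_profile_sum_finite[OF c s]
      by (simp add: nn_integral_int_shift[where h="\<lambda>d. ennreal (sep_profile c \<sigma> d)"] ennreal_enn2real_if)
  qed simp
qed simp

lemma separated_cover_sum:
  assumes bound: "\<And>S. quad_separated c S y \<Longrightarrow>
           (\<integral>\<^sup>+n. ennreal (max 1 \<bar>y n\<bar> powr e) * indicator S n \<partial>count_space UNIV) \<le> ennreal Cs"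
    and cover: "S1 \<union> S2 = UNIV" and sep: "quad_separated c S1 y" "quad_separated c S2 y"
    and Cs: "0 \<le> Cs"
  shows "(\<integral>\<^sup>+n. ennreal (max 1 \<bar>y n\<bar> powr e) \<partial>count_space UNIV) \<le> ennreal (2 * Cs)"
proof -
  have "(\<integral>\<^sup>+n. ennreal (max 1 \<bar>y n\<bar> powr e) \<partial>count_space UNIV)
      \<le> (\<integral>\<^sup>+n. ennreal (max 1 \<bar>y n\<bar> powr e) * indicator S1 n
              + ennreal (max 1 \<bar>y n\<bar> powr e) * indicator S2 n \<partial>count_space UNIV)"
    using cover by (intro nn_integral_mono) (auto simp: indicator_def)
  also have "\<dots> \<le> ennreal Cs + ennreal Cs"
    by (simp add: nn_integral_add add_mono bound sep)
  finally show ?thesis using Cs by (simp add: ennreal_plus[symmetric] del: ennreal_plus)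
qed

text \<open>The resonance function of the cubic dispersion: for fixed output frequency \<open>k\<close>,
  \<open>n \<mapsto> (\<alpha>(k-n)+P)^3 + (\<alpha>n+Q)^3\<close> is a quadratic polynomial in \<open>n\<close> with leading
  coefficient \<open>3\<alpha>^2(\<alpha>k+P+Q)\<close>.  On each side of its vertex it is quadratically separated.\<close>

lemma quadratic_branch_separated:
  fixes a \<beta> n m :: real
  assumes "(0 \<le> 2*a*n + \<beta> \<and> 0 \<le> 2*a*m + \<beta>) \<or> (2*a*n + \<beta> < 0 \<and> 2*a*m + \<beta> < 0)"
  shows "\<bar>a\<bar> * (n - m)^2 \<le> \<bar>(n - m) * (a*(n+m) + \<beta>)\<bar>"
proof -
  have "\<bar>a * (n - m)\<bar> \<le> \<bar>a*(n+m) + \<beta>\<bar>"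
    using assms by (auto simp: abs_if algebra_simps split: if_splits)
  then have "\<bar>n - m\<bar> * \<bar>a * (n - m)\<bar> \<le> \<bar>n - m\<bar> * \<bar>a*(n+m) + \<beta>\<bar>"
    by (intro mult_left_mono) auto
  then show ?thesis by (simp add: abs_mult power2_eq_square mult_ac)
qed

lemma cubic_phase_separated:
  fixes \<alpha> P Q \<tau> :: real and k :: int
  assumes nonres: "\<bar>\<alpha>\<bar>/2 \<le> \<bar>\<alpha> * of_int k + P + Q\<bar>"
  defines "y \<equiv> \<lambda>n. \<tau> + (\<alpha> * of_int (k - n) + P)^3 + (\<alpha> * of_int n + Q)^3"
  shows "\<exists>S1 S2. S1 \<union> S2 = UNIV \<and> quad_separated (3 * \<bar>\<alpha>\<bar>^3 / 2) S1 y \<and> quad_separated (3 * \<bar>\<alpha>\<bar>^3 / 2) S2 y"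
proof -
  define A where "A = \<alpha> * of_int k + P"
  define a where "a = 3 * \<alpha>^2 * (A + Q)"
  define \<beta> where "\<beta> = 3 * \<alpha> * (Q^2 - A^2)"
  have y_diff: "y n - y m = (of_int n - of_int m) * (a * (of_int n + of_int m) + \<beta>)" for n m
    unfolding y_def a_def \<beta>_def A_def by (simp add: power3_eq_cube power2_eq_square algebra_simps)
  have "3 * \<bar>\<alpha>\<bar>^3 / 2 = 3 * \<alpha>^2 * (\<bar>\<alpha>\<bar>/2)"
    by (simp add: power3_eq_cube power2_eq_square abs_mult_self_eq)
  also have "\<dots> \<le> 3 * \<alpha>^2 * \<bar>A + Q\<bar>"
    using nonres by (intro mult_left_mono) (simp_all add: A_def)
  also have "\<dots> = \<bar>a\<bar>" by (simp add: a_def abs_mult)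
  finally have c_le: "3 * \<bar>\<alpha>\<bar>^3 / 2 \<le> \<bar>a\<bar>" .
  have sep: "quad_separated (3 * \<bar>\<alpha>\<bar>^3 / 2) S y"
    if "S = {n. 0 \<le> 2*a * of_int n + \<beta>} \<or> S = {n. 2*a * of_int n + \<beta> < 0}" for S
    unfolding quad_separated_def
  proof (intro ballI)
    fix n m assume "n \<in> S" "m \<in> S"
    then have branch: "(0 \<le> 2*a * of_int n + \<beta> \<and> 0 \<le> 2*a * of_int m + \<beta>)
                      \<or> (2*a * of_int n + \<beta> < 0 \<and> 2*a * of_int m + \<beta> < 0)"
      using that by auto
    have "3 * \<bar>\<alpha>\<bar>^3 / 2 * (of_int (n - m))^2 \<le> \<bar>a\<bar> * (of_int n - of_int m)^2"
      using mult_right_mono[OF c_le, of "(of_int n - of_int m)^2"] by simp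
    also have "\<dots> \<le> \<bar>y n - y m\<bar>"
      unfolding y_diff by (rule quadratic_branch_separated[OF branch])
    finally show "3 * \<bar>\<alpha>\<bar>^3 / 2 * (of_int (n - m))^2 \<le> \<bar>y n - y m\<bar>" .
  qed
  show ?thesis
    by (rule exI[of _ "{n. 0 \<le> 2*a * of_int n + \<beta>}"], rule exI[of _ "{n. 2*a * of_int n + \<beta> < 0}"])
       (auto intro: sep)
qed

text \<open>Near-resonant output frequencies (where the leading coefficient degenerates) are unique.\<close>

lemma near_resonance_unique:
  fixes \<alpha> c :: real and k1 k2 :: int
  assumes "\<alpha> \<noteq> 0" "\<bar>\<alpha> * of_int k1 + c\<bar> < \<bar>\<alpha>\<bar>/2" "\<bar>\<alpha> * of_int k2 + c\<bar> < \<bar>\<alpha>\<bar>/2"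
  shows "k1 = k2"
proof -
  have "\<bar>\<alpha>\<bar> * \<bar>of_int (k1 - k2)\<bar> = \<bar>(\<alpha> * of_int k1 + c) - (\<alpha> * of_int k2 + c)\<bar>"
    by (simp add: abs_mult[symmetric] algebra_simps)
  also have "\<dots> < \<bar>\<alpha>\<bar>" using assms(2,3) by linarith
  finally have "\<bar>of_int (k1 - k2) :: real\<bar> < 1" using assms(1) by simp
  then show ?thesis by linarith
qed

text \<open>The time kernel of two Japanese-bracket weights: after translating, it is the
  one-dimensional convolution \<open>\<langle>X - x\<rangle>^{-r} \<langle>x\<rangle>^{-r}\<close>, with \<open>X\<close> the total phase.\<close>

lemma japanese_weight_time_kernel:
  fixes a \<beta> :: "int \<Rightarrow> real"
  assumes r: "1/2 < r" "r < 1" "r \<le> 2*b"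
  shows "sq_conv (\<lambda>s j. 1 / japanese (s + a j) powr b) (\<lambda>s j. 1 / japanese (s + \<beta> j) powr b) \<tau> k k'
           \<le> ennreal (japanese_conv_const r * max 1 \<bar>\<tau> + a (k - k') + \<beta> k'\<bar> powr (1 - 2*r))"
proof -
  define X where "X = \<tau> + a (k - k') + \<beta> k'"
  define h where "h x = ennreal (japanese (X - x) powr (-r) * japanese x powr (-r))" for x
  have "(1 / japanese s powr b)^2 \<le> japanese s powr (-r)" for s
  proof -
    have "(1 / japanese s powr b)^2 = japanese s powr (-(2*b))"
      using japanese_pos[of s] by (simp add: powr_minus_divide power2_eq_square powr_add[symmetric])
    also have "\<dots> \<le> japanese s powr (-r)"
      using r japanese_ge_one[of s] by (intro powr_mono) auto
    finally show ?thesis .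
  qed
  then have "sq_conv (\<lambda>s j. 1 / japanese (s + a j) powr b) (\<lambda>s j. 1 / japanese (s + \<beta> j) powr b) \<tau> k k'
      \<le> (\<integral>\<^sup>+\<tau>'. h (\<tau>' + \<beta> k') \<partial>lborel)"
    unfolding sq_conv_def prod_conv_def h_def X_def
    by (intro nn_integral_mono ennreal_leI mult_mono) (simp_all add: algebra_simps)
  also have "\<dots> = (\<integral>\<^sup>+x. h x \<partial>lborel)"
  proof -
    have "h \<in> borel_measurable borel" unfolding h_def by measurable
    from nn_integral_real_affine[OF this, of 1 "\<beta> k'"] show ?thesis by (simp add: add.commute)
  qed
  also have "\<dots> \<le> ennreal (japanese_conv_const r * max 1 \<bar>X\<bar> powr (1 - 2*r))"
    unfolding h_def using r by (intro japanese_convolution_bound) auto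
  finally show ?thesis by (simp add: X_def)
qed

lemma cubic_weight_row_sum:
  fixes \<alpha> P Q r b Cs :: real and k :: int
  assumes r: "1/2 < r" "r < 1" "r \<le> 2*b"
    and nonres: "\<bar>\<alpha>\<bar>/2 \<le> \<bar>\<alpha> * of_int k + P + Q\<bar>"
    and sum_bound: "\<And>S y. quad_separated (3 * \<bar>\<alpha>\<bar>^3 / 2) S y \<Longrightarrow>
          (\<integral>\<^sup>+n. ennreal (max 1 \<bar>y n\<bar> powr (1 - 2*r)) * indicator S n \<partial>count_space UNIV) \<le> ennreal Cs"
    and Cs: "0 \<le> Cs"
  shows "(\<integral>\<^sup>+k'. sq_conv (\<lambda>s j. 1 / japanese (s + (\<alpha> * of_int j + P)^3) powr b)
                         (\<lambda>s j. 1 / japanese (s + (\<alpha> * of_int j + Q)^3) powr b) \<tau> k k' \<partial>count_space UNIV)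
           \<le> ennreal (japanese_conv_const r * (2 * Cs))"
proof -
  define y where "y n = \<tau> + (\<alpha> * of_int (k - n) + P)^3 + (\<alpha> * of_int n + Q)^3" for n
  obtain S1 S2 where cover: "S1 \<union> S2 = UNIV"
    and sep: "quad_separated (3 * \<bar>\<alpha>\<bar>^3 / 2) S1 y" "quad_separated (3 * \<bar>\<alpha>\<bar>^3 / 2) S2 y"
    using cubic_phase_separated[OF nonres, of \<tau>] unfolding y_def by blast
  have "(\<integral>\<^sup>+k'. sq_conv (\<lambda>s j. 1 / japanese (s + (\<alpha> * of_int j + P)^3) powr b)
                         (\<lambda>s j. 1 / japanese (s + (\<alpha> * of_int j + Q)^3) powr b) \<tau> k k' \<partial>count_space UNIV)
      \<le> (\<integral>\<^sup>+k'. ennreal (japanese_conv_const r) * ennreal (max 1 \<bar>y k'\<bar> powr (1 - 2*r)) \<partial>count_space UNIV)"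
    using japanese_weight_time_kernel[OF r, of "\<lambda>j. (\<alpha> * of_int j + P)^3" "\<lambda>j. (\<alpha> * of_int j + Q)^3"]
      japanese_conv_const_nonneg[OF r(1,2)]
    by (intro nn_integral_mono) (simp add: y_def ennreal_mult)
  also have "\<dots> \<le> ennreal (japanese_conv_const r) * ennreal (2 * Cs)"
    using separated_cover_sum[OF sum_bound cover sep Cs] by (simp add: nn_integral_cmult mult_left_mono)
  finally show ?thesis
    using japanese_conv_const_nonneg[OF r(1,2)] Cs by (simp add: ennreal_mult)
qed

text \<open>For the cubic weights the time kernel is bounded uniformly, since \<open>1 - 2r < 0\<close>.\<close>

lemma cubic_weight_kernel_bounded:
  fixes \<alpha> P Q r b :: real
  assumes r: "1/2 < r" "r < 1" "r \<le> 2*b"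
  shows "sq_conv (\<lambda>s j. 1 / japanese (s + (\<alpha> * of_int j + P)^3) powr b)
                 (\<lambda>s j. 1 / japanese (s + (\<alpha> * of_int j + Q)^3) powr b) \<tau> k k'
           \<le> ennreal (japanese_conv_const r)"
proof -
  define X where "X = \<tau> + (\<alpha> * of_int (k - k') + P)^3 + (\<alpha> * of_int k' + Q)^3"
  have "max 1 \<bar>X\<bar> powr (1 - 2*r) \<le> 1"
    using powr_mono2'[of "1 - 2*r" 1 "max 1 \<bar>X\<bar>"] r by simp
  then have "japanese_conv_const r * max 1 \<bar>X\<bar> powr (1 - 2*r) \<le> japanese_conv_const r"
    using japanese_conv_const_nonneg[OF r(1,2)] by (simp add: mult_left_le)
  moreover have "sq_conv (\<lambda>s j. 1 / japanese (s + (\<alpha> * of_int j + P)^3) powr b)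
                 (\<lambda>s j. 1 / japanese (s + (\<alpha> * of_int j + Q)^3) powr b) \<tau> k k'
      \<le> ennreal (japanese_conv_const r * max 1 \<bar>X\<bar> powr (1 - 2*r))"
    using japanese_weight_time_kernel[OF r, of "\<lambda>j. (\<alpha> * of_int j + P)^3" "\<lambda>j. (\<alpha> * of_int j + Q)^3"]
    by (simp add: X_def del: of_int_diff)
  ultimately show ?thesis
    using ennreal_leI order_trans by blast
qed

text \<open>The estimate for fixed shifts \<open>P\<close>, \<open>Q\<close>: the exceptional set is the (at most one) output
  frequency \<open>k\<close> at which the resonance function degenerates.\<close>

lemma cubic_bilinear_estimate:
  fixes \<alpha> P Q r b Cs :: real and u v :: "real \<Rightarrow> int \<Rightarrow> complex"
  assumes "\<alpha> \<noteq> 0" and r: "1/2 < r" "r < 1" "r \<le> 2*b"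
    and sum_bound: "\<And>S y. quad_separated (3 * \<bar>\<alpha>\<bar>^3 / 2) S y \<Longrightarrow>
          (\<integral>\<^sup>+n. ennreal (max 1 \<bar>y n\<bar> powr (1 - 2*r)) * indicator S n \<partial>count_space UNIV) \<le> ennreal Cs"
    and Cs: "0 \<le> Cs"
    and meas: "\<forall>k. (\<lambda>\<tau>. u \<tau> k) \<in> borel_measurable lborel" "\<forall>k. (\<lambda>\<tau>. v \<tau> k) \<in> borel_measurable lborel"
  shows "l2L2e (absconv u v)
           \<le> ennreal (sqrt (japanese_conv_const r * (2 * Cs) + japanese_conv_const r))
              * l2L2 (\<lambda>\<tau> k. complex_of_real (japanese (\<tau> + (\<alpha> * of_int k + P)^3) powr b) * u \<tau> k)
              * l2L2 (\<lambda>\<tau> k. complex_of_real (japanese (\<tau> + (\<alpha> * of_int k + Q)^3) powr b) * v \<tau> k)"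
proof (rule weighted_convolution_estimate[OF _ _ _ _ meas,
      where E="{k. \<bar>\<alpha> * of_int k + (P + Q)\<bar> < \<bar>\<alpha>\<bar>/2}"])
  show "(\<integral>\<^sup>+k'. sq_conv (\<lambda>s j. 1 / japanese (s + (\<alpha> * of_int j + P)^3) powr b)
          (\<lambda>s j. 1 / japanese (s + (\<alpha> * of_int j + Q)^3) powr b) \<tau> k k' \<partial>count_space UNIV)
        \<le> ennreal (japanese_conv_const r * (2 * Cs))"
    if "k \<notin> {k. \<bar>\<alpha> * of_int k + (P + Q)\<bar> < \<bar>\<alpha>\<bar>/2}" for \<tau> k
    using cubic_weight_row_sum[OF r _ sum_bound Cs] that by (simp add: add.assoc)
  show "k1 = k2" if "k1 \<in> {k. \<bar>\<alpha> * of_int k + (P + Q)\<bar> < \<bar>\<alpha>\<bar>/2}"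
    "k2 \<in> {k. \<bar>\<alpha> * of_int k + (P + Q)\<bar> < \<bar>\<alpha>\<bar>/2}" for k1 k2
    using near_resonance_unique[OF assms(1)] that by auto
qed (use Cs japanese_conv_const_nonneg[OF r(1,2)] cubic_weight_kernel_bounded[OF r]
     in \<open>auto simp: slice_measurable_def\<close>)

text \<open>Any \<open>b > 3/8\<close> allows an exponent \<open>r \<in> (3/4, 1)\<close> with \<open>r \<le> 2b\<close>;
  then \<open>\<sigma> = 2r - 1 > 1/2\<close> makes the lattice sums converge.\<close>

theorem lemma3p1:
  fixes \<alpha>1 b :: real
  assumes "\<alpha>1 \<noteq> 0" and "b > 3/8"
  shows "\<exists>C::real. C > 0 \<and>
    (\<forall>(P::real) (Q::real) (u::real \<Rightarrow> int \<Rightarrow> complex) (v::real \<Rightarrow> int \<Rightarrow> complex).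
       (\<forall>k. (\<lambda>\<tau>. u \<tau> k) \<in> borel_measurable lborel) \<longrightarrow>
       (\<forall>k. (\<lambda>\<tau>. v \<tau> k) \<in> borel_measurable lborel) \<longrightarrow>
       l2L2e (absconv u v) \<le>
         ennreal C * l2L2 (\<lambda>\<tau> k. complex_of_real (japanese (\<tau> + (\<alpha>1 * of_int k + P)^3) powr b) * u \<tau> k)
                   * l2L2 (\<lambda>\<tau> k. complex_of_real (japanese (\<tau> + (\<alpha>1 * of_int k + Q)^3) powr b) * v \<tau> k))"
proof -
  define r where "r = 2 * min b (7/16)"
  have r: "1/2 < r" "r < 1" "r \<le> 2*b" and r_large: "3/4 < r"
    using assms(2) by (auto simp: r_def)
  obtain Cs where Cs: "0 \<le> Cs" and sum_bound: "\<And>S y. quad_separated (3 * \<bar>\<alpha>1\<bar>^3 / 2) S y \<Longrightarrow>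
      (\<integral>\<^sup>+n. ennreal (max 1 \<bar>y n\<bar> powr (1 - 2*r)) * indicator S n \<partial>count_space UNIV) \<le> ennreal Cs"
    using quad_separated_sum_bound[of "3 * \<bar>\<alpha>1\<bar>^3 / 2" "2*r - 1"] assms(1) r_large by auto
  define K where "K = japanese_conv_const r"
  have K: "0 \<le> K" using japanese_conv_const_nonneg[OF r(1,2)] by (simp add: K_def)
  show ?thesis
  proof (intro exI[of _ "sqrt (K * (2 * Cs) + K) + 1"] conjI allI impI)
    fix P Q :: real and u v :: "real \<Rightarrow> int \<Rightarrow> complex"
    assume meas: "\<forall>k. (\<lambda>\<tau>. u \<tau> k) \<in> borel_measurable lborel" "\<forall>k. (\<lambda>\<tau>. v \<tau> k) \<in> borel_measurable lborel"
    show "l2L2e (absconv u v)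
        \<le> ennreal (sqrt (K * (2 * Cs) + K) + 1)
           * l2L2 (\<lambda>\<tau> k. complex_of_real (japanese (\<tau> + (\<alpha>1 * of_int k + P)^3) powr b) * u \<tau> k)
           * l2L2 (\<lambda>\<tau> k. complex_of_real (japanese (\<tau> + (\<alpha>1 * of_int k + Q)^3) powr b) * v \<tau> k)"
      unfolding K_def
      by (rule order_trans[OF cubic_bilinear_estimate[where P=P and Q=Q, OF assms(1) r _ Cs meas]])
         (auto intro!: sum_bound mult_right_mono ennreal_leI)
  qed (use K Cs in \<open>auto intro!: add_nonneg_pos\<close>)
qed


end
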